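(* Consider the cone percolation process on $\mathbb{T}_d^+$ ($d\ge 2$) with radius of influence distributed as $R$, where $p_0=\mathbb{P}(R=0)\in(0,1)$. (I) If $\mathbb{E}(d^R) > 1 + p_0$ (including the case $\mathbb{E}(d^R)=\infty$), then $\mathbb{P}_+[V] > 0$. (II) If $\mathbb{E}(d^R) \le 2 - \frac{1}{d}$, then $\mathbb{P}_+[V] = 0$.
   Context: Let $d\ge 2$ and let $\mathbb{T}_d$ be the infinite tree in which every vertex has exactly $d+1$ neighbours. Fix a vertex $\mathcal{O}$ (the origin); $d(u,v)$ denotes graph distance. Write $u\le v$ if $u$ lies on the path from $\mathcal{O}$ to $v$ (so $\mathcal{O}\le v$ for all $v$). Fix a neighbour $w$ of $\mathcal{O}$ and let $\mathbb{T}_d^+$ be the subtree obtained by deleting all vertices $x$ with $w\le x$; in $\mathbb{T}_d^+$ every vertex $u$ has exactly $d$ neighbours $x$ with $u\le x$ (its children). Let $R$ be a random variable with values in $\{0,1,2,\dots\}$, $p_k=\mathbb{P}(R=k)$, and assume $p_0\in(0,1)$. Cone percolation on $G\in\{\mathbb{T}_d,\mathbb{T}_d^+\}$: to each vertex $u$ of $G$ attach an independent copy $R_u$ of $R$; let $B_u=\{v\in G: u\le v,\ d(u,v)\le R_u\}$; set $I_0=\{\mathcal{O}\}$, $I_{n+1}=\bigcup_{u\in I_n}B_u$ for $n\ge0$, $I=\bigcup_{n\ge0}I_n$, and let $V$ be the event $\{|I|=\infty\}$ (survival). $\mathbb{P}_+$ and $\mathbb{P}$ denote the probability measures of the process on $\mathbb{T}_d^+$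 and on $\mathbb{T}_d$ respectively. *)

theory Defs
  imports "HOL-Probability.Probability" "HOL-Library.Sublist"
begin

text \<open>The rooted tree T_d^+ : vertices are finite words over the alphabet {0..<d};
  the origin is the empty word, the children of u are u @ [i] for i < d.
  u \<le> v (u on the path from the origin to v) is the prefix relation, and for
  prefix u v the graph distance d(u,v) equals length v - length u.\<close>

definition verts :: "nat \<Rightarrow> nat list set" where
  "verts d = {xs. \<forall>x\<in>set xs. x < d}"

text \<open>B_u = {v : u \<le> v, d(u,v) \<le> R_u}, where \<omega> u plays the role of R_u.\<close>
definition cone :: "nat \<Rightarrow> (nat list \<Rightarrow> nat) \<Rightarrow> nat list \<Rightarrow> nat list set" where
  "cone d \<omega> u = {v \<in> verts d. prefix u v \<and> length v - length u \<le> \<omega> u}"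

fun infected :: "nat \<Rightarrow> (nat list \<Rightarrow> nat) \<Rightarrow> nat \<Rightarrow> nat list set" where
  "infected d \<omega> 0 = {[]}"
| "infected d \<omega> (Suc n) = (\<Union>u\<in>infected d \<omega> n. cone d \<omega> u)"

definition infected_all :: "nat \<Rightarrow> (nat list \<Rightarrow> nat) \<Rightarrow> nat list set" where
  "infected_all d \<omega> = (\<Union>n. infected d \<omega> n)"

definition cone_space :: "nat \<Rightarrow> nat pmf \<Rightarrow> (nat list \<Rightarrow> nat) measure" where
  "cone_space d p = (\<Pi>\<^sub>M u\<in>verts d. measure_pmf p)"

definition survival :: "nat \<Rightarrow> nat pmf \<Rightarrow> (nat list \<Rightarrow> nat) set" where
  "survival d p = {\<omega> \<in> space (cone_space d p). infinite (infected_all d \<omega>)}"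

end

theory Submission
  imports Defs
begin

(* A path w from the origin is infected exactly when, walking down w, the "remaining range"
   never drops to zero before the last step: at every vertex the range is the maximum of the
   mark R_u and the range inherited from the parent minus one.  Since the tree is locally
   finite, the infected set is infinite iff for every n some path of length n is reached.
   The event "a reached path of length n exists" only depends on the marks of the finitely
   many vertices of depth < n; their law is a finite product of copies of p, and splitting
   off the root yields the recursion
      q_(n+1)(m) = E[ if max m R = 0 then 0 else 1 - (1 - q_n (max m R - 1))^d ]
   for the probability q_n(m) of that event when the root starts with carried range m.
   The survival probability is the decreasing limit of q_n(0).
   (I)  If E d^R > 1 + p_0 there is c > 0 with c <= E[1 - (1-c)^(d^R); R >= 1]; then by
        induction q_n(j) >= 1 - (1-c)^(d^j), so P(V) >= c.
   (II) If E d^R <= 2 - 1/d, then q_n(m) <= (1 + d + ... + d^m) q_(n-m)(0) and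
        1 - (1-x)^d <= d x - (d-1) x^2 show that q_n(0) would decrease by a fixed amount
        every L steps as long as it stays above some eps > 0; hence q_n(0) -> 0.
   The sections below follow this order: reached paths, the law of the marks on a finite
   ball, the recursion, the transfer to the infinite product space, elementary estimates
   for 1 - (1-x)^d, and finally parts (I) and (II). *)

section \<open>Reached paths\<close>

definition shift :: "(nat list \<Rightarrow> nat) \<Rightarrow> nat \<Rightarrow> nat list \<Rightarrow> nat" where
  "shift \<omega> i = (\<lambda>v. \<omega> (i # v))"

text \<open>The remaining range at the end of the path w when the origin starts with carried
  range m: at each vertex it is the maximum of the vertex's mark and the parent's range
  minus one.\<close>
fun potential :: "(nat list \<Rightarrow> nat) \<Rightarrow> nat \<Rightarrow> nat list \<Rightarrow> nat" where
  "potential \<omega> m [] = max m (\<omega> [])"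
| "potential \<omega> m (i # w) = potential (shift \<omega> i) (max m (\<omega> []) - 1) w"

fun reached :: "nat \<Rightarrow> (nat list \<Rightarrow> nat) \<Rightarrow> nat \<Rightarrow> nat list \<Rightarrow> bool" where
  "reached d \<omega> m [] = True"
| "reached d \<omega> m (i # w) =
     (i < d \<and> 0 < max m (\<omega> []) \<and> reached d (shift \<omega> i) (max m (\<omega> []) - 1) w)"

text \<open>Some path of length n is reached; this recursive form is what the probabilistic
  recursion is built on.\<close>
fun alive :: "nat \<Rightarrow> (nat list \<Rightarrow> nat) \<Rightarrow> nat \<Rightarrow> nat \<Rightarrow> bool" where
  "alive d \<omega> m 0 = True"
| "alive d \<omega> m (Suc n) =
     (0 < max m (\<omega> []) \<and> (\<exists>i<d. alive d (shift \<omega> i) (max m (\<omega> []) - 1) n))"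

lemma alive_iff_reached: "alive d \<omega> m n \<longleftrightarrow> (\<exists>w. length w = n \<and> reached d \<omega> m w)"
proof (induction n arbitrary: \<omega> m)
  case 0
  then show ?case by auto
next
  case (Suc n)
  show ?case
  proof
    assume "alive d \<omega> m (Suc n)"
    then obtain i where "i < d" "0 < max m (\<omega> [])" "alive d (shift \<omega> i) (max m (\<omega> []) - 1) n"
      by auto
    with Suc obtain w where "length w = n" "reached d (shift \<omega> i) (max m (\<omega> []) - 1) w"
      by blast
    with \<open>i < d\<close> \<open>0 < max m (\<omega> [])\<close> show "\<exists>w. length w = Suc n \<and> reached d \<omega> m w"
      by (intro exI[of _ "i # w"]) auto
  next
    assume "\<exists>w. length w = Suc n \<and> reached d \<omega> m w"
    then obtain i w where "length w = n" "reached d \<omega> m (i # w)"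
      by (metis length_Suc_conv)
    with Suc show "alive d \<omega> m (Suc n)" by auto
  qed
qed

lemma reached_snoc:
  "reached d \<omega> m (u @ [i]) \<longleftrightarrow> reached d \<omega> m u \<and> i < d \<and> 0 < potential \<omega> m u"
  by (induction u arbitrary: \<omega> m) auto

lemma potential_snoc:
  "potential \<omega> m (u @ [i]) = max (potential \<omega> m u - 1) (\<omega> (u @ [i]))"
  by (induction u arbitrary: \<omega> m) (simp_all add: shift_def)

lemma mark_le_potential: "\<omega> u \<le> potential \<omega> m u"
  by (induction u rule: rev_induct) (simp_all add: potential_snoc)

lemma reached_in_verts: "reached d \<omega> m w \<Longrightarrow> w \<in> verts d"
  by (induction w rule: rev_induct) (auto simp: reached_snoc verts_def)

lemma reached_take: "reached d \<omega> m w \<Longrightarrow> reached d \<omega> m (take k w)"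
proof (induction w arbitrary: \<omega> m k)
  case (Cons i w)
  then show ?case by (cases k) auto
qed simp

lemma reached_extend:
  assumes "reached d \<omega> 0 u" "w \<noteq> [] \<longrightarrow> u @ w \<in> verts d" "length w \<le> k"
    "k \<le> potential \<omega> 0 u"
  shows "reached d \<omega> 0 (u @ w) \<and> k \<le> potential \<omega> 0 (u @ w) + length w"
  using assms(2,3)
proof (induction w rule: rev_induct)
  case Nil
  then show ?case using assms by simp
next
  case (snoc i w)
  have "w \<noteq> [] \<longrightarrow> u @ w \<in> verts d" using snoc.prems by (auto simp: verts_def)
  with snoc have IH: "reached d \<omega> 0 (u @ w)" "k \<le> potential \<omega> 0 (u @ w) + length w"
    by auto
  have pos: "0 < potential \<omega> 0 (u @ w)" using IH snoc.prems by simp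
  have "i < d" using snoc.prems by (auto simp: verts_def)
  with IH pos have "reached d \<omega> 0 ((u @ w) @ [i])"
    by (simp add: reached_snoc del: append_assoc)
  moreover have "potential \<omega> 0 (u @ w) - 1 \<le> potential \<omega> 0 ((u @ w) @ [i])"
    by (simp add: potential_snoc del: append_assoc)
  ultimately show ?case using IH pos by simp
qed

text \<open>Every infected vertex is reached: induction on the generation, using that a cone
  B_u is covered by the range of its apex u.\<close>
lemma infected_imp_reached: "v \<in> infected d \<omega> n \<Longrightarrow> reached d \<omega> 0 v"
proof (induction n arbitrary: v)
  case (Suc n)
  then obtain u where u: "u \<in> infected d \<omega> n" "v \<in> cone d \<omega> u" by auto
  then obtain w where w: "v = u @ w" "v \<in> verts d" "length w \<le> \<omega> u"
    by (auto simp: cone_def prefix_def)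
  have "reached d \<omega> 0 u" using Suc.IH u by auto
  then show ?case
    using reached_extend[of d \<omega> u w "\<omega> u"] w mark_le_potential[of \<omega> u 0] by auto
qed simp

lemma reached_imp_infected:
  "reached d \<omega> 0 v \<Longrightarrow> v \<in> infected_all d \<omega> \<and>
     (\<exists>a. prefix a v \<and> a \<in> infected_all d \<omega> \<and> length v - length a + potential \<omega> 0 v \<le> \<omega> a)"
proof (induction v rule: rev_induct)
  case Nil
  have "[] \<in> infected_all d \<omega>" unfolding infected_all_def by (auto intro: exI[of _ 0])
  then show ?case by auto
next
  case (snoc i v)
  have hv: "reached d \<omega> 0 v" "0 < potential \<omega> 0 v"
    using snoc.prems by (auto simp: reached_snoc)
  then obtain a where a: "prefix a v" "a \<in> infected_all d \<omega>"
    "length v - length a + potential \<omega> 0 v \<le> \<omega> a"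
    using snoc.IH by blast
  from a(2) obtain k where k: "a \<in> infected d \<omega> k" unfolding infected_all_def by auto
  have la: "length a \<le> length v" using a(1) by (simp add: prefix_length_le)
  have pa: "prefix a (v @ [i])" using a(1) by (simp add: prefix_snoc)
  have "v @ [i] \<in> cone d \<omega> a"
    using reached_in_verts[OF snoc.prems] pa a(3) hv(2) la by (auto simp: cone_def)
  then have "v @ [i] \<in> infected d \<omega> (Suc k)" using k by auto
  then have inf: "v @ [i] \<in> infected_all d \<omega>" unfolding infected_all_def by blast
  show ?case
  proof (cases "\<omega> (v @ [i]) \<le> potential \<omega> 0 v - 1")
    case True
    then have "length (v @ [i]) - length a + potential \<omega> 0 (v @ [i]) \<le> \<omega> a"
      using a(3) la hv(2) by (simp add: potential_snoc)
    then show ?thesis using inf a(2) pa by blast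
  next
    case False
    then have "potential \<omega> 0 (v @ [i]) = \<omega> (v @ [i])" by (simp add: potential_snoc)
    then show ?thesis using inf by (intro conjI exI[of _ "v @ [i]"]) auto
  qed
qed

lemma infected_all_iff_reached: "v \<in> infected_all d \<omega> \<longleftrightarrow> reached d \<omega> 0 v"
proof
  assume "v \<in> infected_all d \<omega>"
  then obtain n where "v \<in> infected d \<omega> n" unfolding infected_all_def by auto
  then show "reached d \<omega> 0 v" by (rule infected_imp_reached)
qed (use reached_imp_infected in blast)

lemma infected_all_bounded:
  assumes "\<not> alive d \<omega> 0 n"
  shows "infected_all d \<omega> \<subseteq> {xs. set xs \<subseteq> {..<d} \<and> length xs \<le> n}"
proof
  fix v assume "v \<in> infected_all d \<omega>"
  then have v: "reached d \<omega> 0 v" by (simp add: infected_all_iff_reached)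
  have "length v \<le> n"
  proof (rule ccontr)
    assume "\<not> length v \<le> n"
    then have "length (take n v) = n" by simp
    with reached_take[OF v] assms show False using alive_iff_reached by blast
  qed
  moreover have "set v \<subseteq> {..<d}" using reached_in_verts[OF v] by (auto simp: verts_def)
  ultimately show "v \<in> {xs. set xs \<subseteq> {..<d} \<and> length xs \<le> n}" by auto
qed

lemma infinite_iff_alive: "infinite (infected_all d \<omega>) \<longleftrightarrow> (\<forall>n. alive d \<omega> 0 n)"
proof
  assume inf: "infinite (infected_all d \<omega>)"
  show "\<forall>n. alive d \<omega> 0 n"
  proof (rule ccontr)
    assume "\<not> (\<forall>n. alive d \<omega> 0 n)"
    then obtain n where "\<not> alive d \<omega> 0 n" by blast
    from infected_all_bounded[OF this] have "finite (infected_all d \<omega>)"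
      by (rule finite_subset) (rule finite_lists_length_le, simp)
    with inf show False by contradiction
  qed
next
  assume al: "\<forall>n. alive d \<omega> 0 n"
  have "n \<in> length ` infected_all d \<omega>" for n
    using al alive_iff_reached[of d \<omega> 0 n] by (auto simp: infected_all_iff_reached)
  then have "UNIV \<subseteq> length ` infected_all d \<omega>" by blast
  then show "infinite (infected_all d \<omega>)"
    using finite_subset[OF _ finite_imageI] infinite_UNIV_nat by blast
qed

section \<open>The marks of the vertices of depth below n\<close>

definition tree_ball :: "nat \<Rightarrow> nat \<Rightarrow> nat list set" where
  "tree_ball d n = {v \<in> verts d. length v < n}"

lemma finite_tree_ball: "finite (tree_ball d n)"
proof (rule finite_subset)
  show "tree_ball d n \<subseteq> {xs. set xs \<subseteq> {..<d} \<and> length xs \<le> n}"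
    by (auto simp: tree_ball_def verts_def)
qed (rule finite_lists_length_le, simp)

lemma tree_ball_Suc: "tree_ball d (Suc n) = insert [] (\<Union>i<d. (#) i ` tree_ball d n)"
proof (rule set_eqI)
  fix v show "v \<in> tree_ball d (Suc n) \<longleftrightarrow> v \<in> insert [] (\<Union>i<d. (#) i ` tree_ball d n)"
    by (cases v) (auto simp: tree_ball_def verts_def)
qed

lemma prod_tree_ball_Suc:
  "(\<Prod>v\<in>tree_ball d (Suc n). g v) = g [] * (\<Prod>i<d. \<Prod>w\<in>tree_ball d n. g (i # w))"
proof -
  have "(\<Prod>v\<in>(\<Union>i<d. (#) i ` tree_ball d n). g v) = (\<Prod>i<d. \<Prod>v\<in>(#) i ` tree_ball d n. g v)"
    by (rule prod.UNION_disjoint) (auto simp: finite_tree_ball)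
  also have "\<dots> = (\<Prod>i<d. \<Prod>w\<in>tree_ball d n. g (i # w))"
    by (simp add: prod.reindex)
  finally show ?thesis
    unfolding tree_ball_Suc by (subst prod.insert) (auto simp: finite_tree_ball)
qed

lemma alive_local:
  "(\<forall>v\<in>tree_ball d n. \<omega> v = \<omega>' v) \<Longrightarrow> alive d \<omega> m n = alive d \<omega>' m n"
proof (induction n arbitrary: \<omega> \<omega>' m)
  case (Suc n)
  have root: "\<omega> [] = \<omega>' []" using Suc.prems by (auto simp: tree_ball_def verts_def)
  have "\<forall>v\<in>tree_ball d n. shift \<omega> i v = shift \<omega>' i v" if "i < d" for i
    using Suc.prems that by (auto simp: tree_ball_def verts_def shift_def)
  then have "alive d (shift \<omega> i) k n = alive d (shift \<omega>' i) k n" if "i < d" for i k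
    using Suc.IH that by blast
  then have "(\<exists>i<d. alive d (shift \<omega> i) k n) = (\<exists>i<d. alive d (shift \<omega>' i) k n)" for k
    by blast
  then show ?case using root by simp
qed simp

lemma alive_Suc: "alive d \<omega> m (Suc n) \<Longrightarrow> alive d \<omega> m n"
proof -
  assume "alive d \<omega> m (Suc n)"
  then obtain w where "length w = Suc n" "reached d \<omega> m w" using alive_iff_reached by blast
  then have "length (take n w) = n" "reached d \<omega> m (take n w)" using reached_take by auto
  then show ?thesis using alive_iff_reached by blast
qed

definition glue :: "nat \<Rightarrow> nat \<Rightarrow> (nat \<Rightarrow> nat list \<Rightarrow> nat) \<Rightarrow> nat list \<Rightarrow> nat" where
  "glue d r fs = (\<lambda>v. case v of [] \<Rightarrow> r | i # w \<Rightarrow> if i < d then fs i w else 0)"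

lemma glue_root [simp]: "glue d r fs [] = r"
  by (simp add: glue_def)

lemma shift_glue: "i < d \<Longrightarrow> shift (glue d r fs) i = fs i"
  by (auto simp: shift_def glue_def)

lemma glue_eq_iff:
  assumes "\<forall>i\<ge>d. fs i = (\<lambda>_. 0)"
  shows "glue d r fs = f \<longleftrightarrow> r = f [] \<and> (\<forall>i w. d \<le> i \<longrightarrow> f (i # w) = 0)
           \<and> fs = (\<lambda>i. if i < d then shift f i else (\<lambda>_. 0))"
proof
  assume f: "glue d r fs = f"
  have "fs i = (if i < d then shift f i else (\<lambda>_. 0))" for i
    using assms f[symmetric] by (auto simp: shift_glue)
  with f show "r = f [] \<and> (\<forall>i w. d \<le> i \<longrightarrow> f (i # w) = 0)
           \<and> fs = (\<lambda>i. if i < d then shift f i else (\<lambda>_. 0))"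
    by (auto simp: glue_def)
next
  assume "r = f [] \<and> (\<forall>i w. d \<le> i \<longrightarrow> f (i # w) = 0)
           \<and> fs = (\<lambda>i. if i < d then shift f i else (\<lambda>_. 0))"
  then show "glue d r fs = f"
    by (auto simp: glue_def shift_def fun_eq_iff split: list.split)
qed

fun ball_pmf :: "nat \<Rightarrow> nat pmf \<Rightarrow> nat \<Rightarrow> (nat list \<Rightarrow> nat) pmf" where
  "ball_pmf d p 0 = return_pmf (\<lambda>_. 0)"
| "ball_pmf d p (Suc n) =
     map_pmf (\<lambda>(r, fs). glue d r fs) (pair_pmf p (Pi_pmf {..<d} (\<lambda>_. 0) (\<lambda>_. ball_pmf d p n)))"

lemma pmf_ball_pmf_Suc:
  "pmf (ball_pmf d p (Suc n)) f =
     (if \<forall>i w. d \<le> i \<longrightarrow> f (i # w) = 0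
      then pmf p (f []) * (\<Prod>i<d. pmf (ball_pmf d p n) (shift f i)) else 0)"
proof -
  define N where "N = Pi_pmf {..<d} (\<lambda>_. 0) (\<lambda>_. ball_pmf d p n)"
  define S where "S = set_pmf (pair_pmf p N)"
  define fs where "fs = (\<lambda>i. if i < d then shift f i else (\<lambda>_ :: nat list. 0 :: nat))"
  let ?cond = "\<forall>i w. d \<le> i \<longrightarrow> f (i # w) = 0"
  have vanish: "\<forall>i\<ge>d. gs i = (\<lambda>_. 0)" if "(r, gs) \<in> S" for r gs
  proof -
    have "gs \<in> set_pmf N" using that by (simp add: S_def)
    then show ?thesis
      using set_Pi_pmf_subset[of "{..<d}" "\<lambda>_. 0" "\<lambda>_. ball_pmf d p n"] by (auto simp: N_def)
  qed
  have pre: "glue d r gs = f \<longleftrightarrow> ?cond \<and> (r, gs) = (f [], fs)" if "(r, gs) \<in> S" for r gs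
    using glue_eq_iff[OF vanish[OF that]] by (auto simp: fs_def)
  have preimage: "(\<lambda>(r, gs). glue d r gs) -` {f} \<inter> S = (if ?cond then {(f [], fs)} else {}) \<inter> S"
  proof (intro set_eqI)
    fix x :: "nat \<times> (nat \<Rightarrow> nat list \<Rightarrow> nat)"
    obtain r gs where x: "x = (r, gs)" by fastforce
    show "x \<in> (\<lambda>(r, gs). glue d r gs) -` {f} \<inter> S \<longleftrightarrow> x \<in> (if ?cond then {(f [], fs)} else {}) \<inter> S"
      using pre[of r gs] unfolding x by (cases "(r, gs) \<in> S") simp_all
  qed
  have "pmf (ball_pmf d p (Suc n)) f = measure (pair_pmf p N) ((\<lambda>(r, gs). glue d r gs) -` {f})"
    unfolding ball_pmf.simps N_def by (rule pmf_map)
  also have "\<dots> = measure (pair_pmf p N) ((\<lambda>(r, gs). glue d r gs) -` {f} \<inter> S)"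
    unfolding S_def by (rule measure_Int_set_pmf[symmetric])
  also have "\<dots> = measure (pair_pmf p N) ((if ?cond then {(f [], fs)} else {}) \<inter> S)"
    by (simp only: preimage)
  also have "\<dots> = (if ?cond then pmf (pair_pmf p N) (f [], fs) else 0)"
    unfolding S_def by (auto simp: measure_Int_set_pmf measure_pmf_single simp del: set_pair_pmf)
  also have "pmf (pair_pmf p N) (f [], fs) = pmf p (f []) * pmf N fs"
    by (rule pmf_pair)
  also have "pmf N fs = (\<Prod>i<d. pmf (ball_pmf d p n) (shift f i))"
    unfolding N_def by (subst pmf_Pi) (auto simp: fs_def)
  finally show ?thesis .
qed

lemma ball_pmf_eq_Pi_pmf: "ball_pmf d p n = Pi_pmf (tree_ball d n) 0 (\<lambda>_. p)"
proof (induction n)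
  case 0
  then show ?case by (simp add: tree_ball_def)
next
  case (Suc n)
  show ?case
  proof (rule pmf_eqI)
    fix f :: "nat list \<Rightarrow> nat"
    let ?out = "\<lambda>i. \<forall>w. w \<notin> tree_ball d n \<longrightarrow> f (i # w) = 0"
    have sub: "pmf (ball_pmf d p n) (shift f i) =
        (if ?out i then \<Prod>w\<in>tree_ball d n. pmf p (f (i # w)) else 0)" for i
      unfolding Suc.IH by (simp add: pmf_Pi finite_tree_ball shift_def)
    have outside: "i # w \<notin> tree_ball d (Suc n) \<longleftrightarrow> d \<le> i \<or> w \<notin> tree_ball d n" for i w
      by (auto simp: tree_ball_def verts_def)
    have "(\<forall>v. v \<notin> tree_ball d (Suc n) \<longrightarrow> f v = 0) \<longleftrightarrow>
        (\<forall>i w. d \<le> i \<or> w \<notin> tree_ball d n \<longrightarrow> f (i # w) = 0)"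
    proof (intro iffI allI impI)
      fix v assume "\<forall>i w. d \<le> i \<or> w \<notin> tree_ball d n \<longrightarrow> f (i # w) = 0"
        and "v \<notin> tree_ball d (Suc n)"
      then show "f v = 0" using outside by (cases v) (auto simp: tree_ball_def verts_def)
    qed (use outside in blast)
    also have "\<dots> \<longleftrightarrow> (\<forall>i w. d \<le> i \<longrightarrow> f (i # w) = 0) \<and> (\<forall>i<d. ?out i)"
      by (meson not_le)
    finally have supp: "(\<forall>v. v \<notin> tree_ball d (Suc n) \<longrightarrow> f v = 0) \<longleftrightarrow>
        (\<forall>i w. d \<le> i \<longrightarrow> f (i # w) = 0) \<and> (\<forall>i<d. ?out i)" .
    show "pmf (ball_pmf d p (Suc n)) f = pmf (Pi_pmf (tree_ball d (Suc n)) 0 (\<lambda>_. p)) f"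
    proof (cases "\<forall>v. v \<notin> tree_ball d (Suc n) \<longrightarrow> f v = 0")
      case True
      then show ?thesis
        using supp by (simp add: pmf_ball_pmf_Suc sub pmf_Pi finite_tree_ball prod_tree_ball_Suc
            del: ball_pmf.simps)
    next
      case False
      have "pmf (ball_pmf d p (Suc n)) f = 0"
      proof (cases "\<forall>i w. d \<le> i \<longrightarrow> f (i # w) = 0")
        case True
        then obtain i where "i < d" "\<not> ?out i" using supp False by blast
        then have "pmf (ball_pmf d p n) (shift f i) = 0" by (auto simp: sub simp del: ball_pmf.simps)
        with \<open>i < d\<close> have "(\<Prod>i<d. pmf (ball_pmf d p n) (shift f i)) = 0"
          by (intro prod_zero) auto
        then show ?thesis using True by (simp add: pmf_ball_pmf_Suc del: ball_pmf.simps)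
      qed (auto simp: pmf_ball_pmf_Suc simp del: ball_pmf.simps)
      then show ?thesis using False by (subst pmf_Pi_outside[OF finite_tree_ball]) auto
    qed
  qed
qed

section \<open>The recursion for the survival probabilities\<close>

text \<open>The probability that at least one of d independent trials of success probability x
  succeeds.\<close>
definition hit :: "nat \<Rightarrow> real \<Rightarrow> real" where
  "hit d x = 1 - (1 - x) ^ d"

text \<open>The probability that a path of length n is reached when the origin starts with
  carried range m.\<close>
fun alive_prob :: "nat \<Rightarrow> nat pmf \<Rightarrow> nat \<Rightarrow> nat \<Rightarrow> real" where
  "alive_prob d p 0 m = 1"
| "alive_prob d p (Suc n) m =
     (\<integral>r. (if max m r = 0 then 0 else hit d (alive_prob d p n (max m r - 1))) \<partial>measure_pmf p)"

lemma hit_bounds: "0 \<le> x \<Longrightarrow> x \<le> 1 \<Longrightarrow> 0 \<le> hit d x \<and> hit d x \<le> 1"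
  by (simp add: hit_def power_le_one)

lemma hit_mono: "x \<le> y \<Longrightarrow> y \<le> 1 \<Longrightarrow> hit d x \<le> hit d y"
  by (simp add: hit_def power_mono)

lemma alive_prob_bounds: "0 \<le> alive_prob d p n m \<and> alive_prob d p n m \<le> 1"
proof (induction n arbitrary: m)
  case (Suc n)
  let ?f = "\<lambda>r. if max m r = 0 then 0 else hit d (alive_prob d p n (max m r - 1))"
  have f: "0 \<le> ?f r \<and> ?f r \<le> 1" for r
    using hit_bounds Suc.IH by auto
  have "0 \<le> alive_prob d p (Suc n) m"
    using f by (simp add: integral_nonneg_AE del: alive_prob.simps(1))
  moreover have "alive_prob d p (Suc n) m \<le> (\<integral>r. 1 \<partial>measure_pmf p)"
    unfolding alive_prob.simps using f
    by (intro integral_mono measure_pmf.integrable_const_bound[where B=1]) auto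
  ultimately show ?case by simp
qed simp

lemma alive_prob_integrable:
  "integrable (measure_pmf p)
     (\<lambda>r. if max m r = 0 then 0 else hit d (alive_prob d p n (max m r - 1)))"
  using hit_bounds alive_prob_bounds
  by (intro measure_pmf.integrable_const_bound[where B=1]) auto

lemma measure_pair_pmf:
  "measure (pair_pmf A B) X = (\<integral>a. measure (measure_pmf B) {b. (a, b) \<in> X} \<partial>measure_pmf A)"
proof -
  have "emeasure (pair_pmf A B) X = (\<integral>\<^sup>+a. \<integral>\<^sup>+b. indicator X (a, b) \<partial>B \<partial>A)"
    by (simp add: nn_integral_pair_pmf' flip: nn_integral_indicator)
  also have "\<dots> = (\<integral>\<^sup>+a. emeasure (measure_pmf B) {b. (a, b) \<in> X} \<partial>measure_pmf A)"
  proof (rule nn_integral_cong)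
    fix a
    have "(\<lambda>b. indicator X (a, b) :: ennreal) = indicator {b. (a, b) \<in> X}"
      by (auto simp: indicator_def)
    then show "(\<integral>\<^sup>+b. indicator X (a, b) \<partial>B) = emeasure (measure_pmf B) {b. (a, b) \<in> X}"
      by simp
  qed
  also have "\<dots> = ennreal (\<integral>a. measure (measure_pmf B) {b. (a, b) \<in> X} \<partial>measure_pmf A)"
    by (simp add: measure_pmf.emeasure_eq_measure,
        intro nn_integral_eq_integral measure_pmf.integrable_const_bound[where B=1]) auto
  finally show ?thesis
    by (simp add: measure_pmf.emeasure_eq_measure integral_nonneg_AE)
qed

lemma measure_Pi_pmf_exists:
  "measure (Pi_pmf {..<d} dflt (\<lambda>_. M)) {fs. \<exists>i<d. fs i \<in> A} = hit d (measure M A)"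
proof -
  let ?Pi = "measure_pmf (Pi_pmf {..<d} dflt (\<lambda>_. M))"
  have "{fs. \<exists>i<d. fs i \<in> A} = UNIV - Pi {..<d} (\<lambda>_. - A)" by auto
  then have "measure ?Pi {fs. \<exists>i<d. fs i \<in> A} = 1 - measure ?Pi (Pi {..<d} (\<lambda>_. - A))"
    using measure_pmf.prob_compl[of "Pi {..<d} (\<lambda>_. - A)"] by simp
  also have "measure ?Pi (Pi {..<d} (\<lambda>_. - A)) = measure M (- A) ^ d"
    by (simp add: measure_Pi_pmf_Pi)
  also have "measure M (- A) = 1 - measure M A"
    using measure_pmf.prob_compl[of A M] by (simp add: Compl_eq_Diff_UNIV)
  finally show ?thesis by (simp add: hit_def)
qed

text \<open>The recursion computes the probability of survival to depth n under the law of the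
  marks on the ball: condition on the mark of the origin, then the d subtrees are
  independent copies of the depth n-1 problem.\<close>
lemma measure_alive_ball_pmf:
  "measure (ball_pmf d p n) {f. alive d f m n} = alive_prob d p n m"
proof (induction n arbitrary: m)
  case (Suc n)
  define N where "N = Pi_pmf {..<d} (\<lambda>_. 0) (\<lambda>_. ball_pmf d p n)"
  have "(\<lambda>(r, fs). glue d r fs) -` {f. alive d f m (Suc n)}
     = {(r, fs). 0 < max m r \<and> (\<exists>i<d. alive d (fs i) (max m r - 1) n)}"
    by (auto simp: shift_glue)
  then have "measure (ball_pmf d p (Suc n)) {f. alive d f m (Suc n)}
      = (\<integral>r. measure N {fs. 0 < max m r \<and> (\<exists>i<d. alive d (fs i) (max m r - 1) n)} \<partial>p)"
    by (simp add: measure_pair_pmf N_def)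
  also have "\<dots> = alive_prob d p (Suc n) m"
    unfolding alive_prob.simps
  proof (rule Bochner_Integration.integral_cong[OF refl])
    fix r
    show "measure N {fs. 0 < max m r \<and> (\<exists>i<d. alive d (fs i) (max m r - 1) n)}
        = (if max m r = 0 then 0 else hit d (alive_prob d p n (max m r - 1)))"
    proof (cases "max m r = 0")
      case False
      then have "{fs. 0 < max m r \<and> (\<exists>i<d. alive d (fs i) (max m r - 1) n)}
          = {fs. \<exists>i<d. fs i \<in> {g. alive d g (max m r - 1) n}}" by auto
      then have "measure N {fs. 0 < max m r \<and> (\<exists>i<d. alive d (fs i) (max m r - 1) n)}
          = measure N {fs. \<exists>i<d. fs i \<in> {g. alive d g (max m r - 1) n}}"
        by (rule arg_cong)
      also have "\<dots> = hit d (measure (ball_pmf d p n) {g. alive d g (max m r - 1) n})"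
        unfolding N_def by (rule measure_Pi_pmf_exists)
      also have "\<dots> = (if max m r = 0 then 0 else hit d (alive_prob d p n (max m r - 1)))"
        using False Suc.IH by auto
      finally show ?thesis .
    qed simp
  qed
  finally show ?case .
qed simp

section \<open>Survival as a limit\<close>

lemma product_prob_space_pmf: "product_prob_space (\<lambda>_. measure_pmf p)"
  by (rule product_prob_spaceI) (rule measure_pmf.prob_space_axioms)

lemma distr_Pi_pmf:
  assumes "finite K"
  shows "distr (Pi_pmf K dflt (\<lambda>_. p)) (PiM K (\<lambda>_. measure_pmf p)) (\<lambda>x. restrict x K)
       = PiM K (\<lambda>_. measure_pmf p)"
proof -
  interpret P: product_prob_space "\<lambda>_. measure_pmf p" K by (rule product_prob_space_pmf)
  show ?thesis
  proof (rule P.PiM_eqI)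
    fix A assume "\<And>i. i \<in> K \<Longrightarrow> A i \<in> sets (measure_pmf p)"
    have "Pi\<^sub>E K A \<in> sets (PiM K (\<lambda>_. measure_pmf p))"
      using assms by (intro sets_PiM_I_finite) auto
    then have "emeasure (distr (Pi_pmf K dflt (\<lambda>_. p)) (PiM K (\<lambda>_. measure_pmf p))
          (\<lambda>x. restrict x K)) (Pi\<^sub>E K A)
        = emeasure (Pi_pmf K dflt (\<lambda>_. p)) ((\<lambda>x. restrict x K) -` Pi\<^sub>E K A)"
      by (subst emeasure_distr) (auto simp: space_PiM)
    also have "\<dots> = emeasure (Pi_pmf K dflt (\<lambda>_. p)) (PiE_dflt K dflt A)"
      by (intro emeasure_eq_AE AE_pmfI) (auto simp: PiE_dflt_def set_Pi_pmf assms)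
    also have "\<dots> = (\<Prod>i\<in>K. emeasure (measure_pmf p) (A i))"
      by (simp add: measure_pmf.emeasure_eq_measure measure_Pi_pmf_PiE_dflt assms prod_ennreal)
    finally show "emeasure (distr (Pi_pmf K dflt (\<lambda>_. p)) (PiM K (\<lambda>_. measure_pmf p))
        (\<lambda>x. restrict x K)) (Pi\<^sub>E K A) = (\<Prod>i\<in>K. emeasure (measure_pmf p) (A i))" .
  qed (simp_all add: assms)
qed

text \<open>Over a finite index set every set of functions is measurable for the product of
  discrete measures, being a countable union of singletons.\<close>
lemma sets_PiM_pmf:
  fixes p :: "'a :: countable pmf"
  assumes fin: "finite K" and X: "X \<subseteq> PiE K (\<lambda>_. UNIV)"
  shows "X \<in> sets (PiM K (\<lambda>_. measure_pmf p))"
proof -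
  have "X = (\<Union>g\<in>X. PiE K (\<lambda>j. {g j}))"
  proof
    show "X \<subseteq> (\<Union>g\<in>X. PiE K (\<lambda>j. {g j}))"
      using X by (auto simp: PiE_def Pi_def)
    show "(\<Union>g\<in>X. PiE K (\<lambda>j. {g j})) \<subseteq> X"
    proof
      fix h assume "h \<in> (\<Union>g\<in>X. PiE K (\<lambda>j. {g j}))"
      then obtain g where g: "g \<in> X" "h \<in> PiE K (\<lambda>j. {g j})" by auto
      have "g \<in> PiE K (\<lambda>_. UNIV)" using g(1) X by auto
      with g(2) have "h = g" by (auto simp: PiE_def extensional_def fun_eq_iff)
      then show "h \<in> X" using g by simp
    qed
  qed
  also have "\<dots> \<in> sets (PiM K (\<lambda>_. measure_pmf p))"
    using countable_subset[OF X countable_PiE[OF fin]] fin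
    by (intro sets.countable_UN') (auto intro!: sets_PiM_I_finite)
  finally show ?thesis .
qed

definition alive_event :: "nat \<Rightarrow> nat pmf \<Rightarrow> nat \<Rightarrow> (nat list \<Rightarrow> nat) set" where
  "alive_event d p n = {\<omega> \<in> space (cone_space d p). alive d \<omega> 0 n}"

text \<open>Transfer to the infinite product space: survival to depth n is a cylinder event over
  the finite ball, with probability given by the recursion.\<close>
lemma alive_event_measure:
  "alive_event d p n \<in> sets (cone_space d p) \<and>
   measure (cone_space d p) (alive_event d p n) = alive_prob d p n 0"
proof -
  let ?M = "\<lambda>_::nat list. measure_pmf p" and ?K = "tree_ball d n"
  interpret P: product_prob_space ?M "verts d" by (rule product_prob_space_pmf)
  define X where "X = {g \<in> PiE ?K (\<lambda>_. UNIV). alive d g 0 n}"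
  have local: "alive d (restrict \<omega> ?K) 0 n = alive d \<omega> 0 n" for \<omega>
    by (rule alive_local) auto
  have K: "?K \<subseteq> verts d" "finite ?K"
    by (simp_all add: finite_tree_ball) (auto simp: tree_ball_def)
  have X: "X \<in> sets (PiM ?K ?M)"
    by (rule sets_PiM_pmf) (auto simp: X_def finite_tree_ball)
  have emb: "alive_event d p n = prod_emb (verts d) ?M ?K X"
    unfolding alive_event_def cone_space_def prod_emb_def X_def by (auto simp: space_PiM local)
  have "emeasure (cone_space d p) (alive_event d p n) = emeasure (PiM ?K ?M) X"
    unfolding emb cone_space_def using X K by (intro P.emeasure_PiM_emb')
  also have "\<dots> = emeasure (distr (Pi_pmf ?K 0 (\<lambda>_. p)) (PiM ?K ?M) (\<lambda>x. restrict x ?K)) X"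
    by (simp add: distr_Pi_pmf K(2))
  also have "\<dots> = emeasure (Pi_pmf ?K 0 (\<lambda>_. p)) ((\<lambda>x. restrict x ?K) -` X)"
    using X by (subst emeasure_distr) (auto simp: space_PiM)
  also have "(\<lambda>x. restrict x ?K) -` X = {f. alive d f 0 n}"
    by (auto simp: X_def local)
  also have "emeasure (Pi_pmf ?K 0 (\<lambda>_. p)) {f. alive d f 0 n} = alive_prob d p n 0"
    using measure_alive_ball_pmf[of d p n 0]
    by (simp add: ball_pmf_eq_Pi_pmf measure_pmf.emeasure_eq_measure)
  finally have "emeasure (cone_space d p) (alive_event d p n) = alive_prob d p n 0" .
  then have "measure (cone_space d p) (alive_event d p n) = alive_prob d p n 0"
    using alive_prob_bounds[of d p n 0] by (simp add: measure_def)
  moreover have "alive_event d p n \<in> sets (cone_space d p)"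
    unfolding emb cone_space_def using X K(1) by (rule measurable_prod_emb[rotated])
  ultimately show ?thesis by (intro conjI)
qed

text \<open>Survival is the decreasing intersection of the events of survival to depth n, so its
  probability is the limit of the recursion and bounded by each term.\<close>
lemma prob_space_cone_space: "prob_space (cone_space d p)"
  unfolding cone_space_def by (rule prob_space_PiM) (rule measure_pmf.prob_space_axioms)

lemma survival_eq: "survival d p = (\<Inter>n. alive_event d p n)"
  unfolding survival_def alive_event_def by (auto simp: infinite_iff_alive)

lemma survival_sets: "survival d p \<in> sets (cone_space d p)"
  unfolding survival_eq using alive_event_measure by auto

lemma survival_le: "measure (cone_space d p) (survival d p) \<le> alive_prob d p n 0"
proof -
  interpret prob_space "cone_space d p" by (rule prob_space_cone_space)
  have "survival d p \<subseteq> alive_event d p n" unfolding survival_eq by auto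
  then have "measure (cone_space d p) (survival d p) \<le> measure (cone_space d p) (alive_event d p n)"
    using alive_event_measure by (intro finite_measure_mono) auto
  then show ?thesis using alive_event_measure by simp
qed

lemma survival_lim: "(\<lambda>n. alive_prob d p n 0) \<longlonglongrightarrow> measure (cone_space d p) (survival d p)"
proof -
  interpret prob_space "cone_space d p" by (rule prob_space_cone_space)
  have "decseq (alive_event d p)"
    by (rule decseq_SucI) (auto simp: alive_event_def simp del: alive.simps intro: alive_Suc)
  then have "(\<lambda>n. measure (cone_space d p) (alive_event d p n))
      \<longlonglongrightarrow> measure (cone_space d p) (\<Inter>n. alive_event d p n)"
    using alive_event_measure by (intro finite_Lim_measure_decseq) auto
  then show ?thesis using alive_event_measure by (simp add: survival_eq)
qed

lemma one_minus_pow_lower: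
  fixes x :: real
  assumes "0 \<le> x" "x \<le> 1" "1 \<le> d"
  shows "1 - real d * x + (real d - 1) * x^2 \<le> (1 - x) ^ d"
  using assms(3)
proof (induction d rule: dec_induct)
  case (step k)
  have "(1 - x) * (1 - real k * x + (real k - 1) * x^2) \<le> (1 - x) * (1 - x) ^ k"
    using step.IH assms by (intro mult_left_mono) auto
  moreover have "(1 - x) * (1 - real k * x + (real k - 1) * x^2)
        = 1 - real (Suc k) * x + (real (Suc k) - 1) * x^2 + (real k - 1) * x^2 * (1 - x)"
    by (simp add: algebra_simps power2_eq_square)
  moreover have "0 \<le> (real k - 1) * x^2 * (1 - x)" using step.hyps assms by auto
  ultimately show ?case by simp
qed simp

lemma hit_upper:
  "0 \<le> x \<Longrightarrow> x \<le> 1 \<Longrightarrow> 1 \<le> d \<Longrightarrow> hit d x \<le> real d * x - (real d - 1) * x^2"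
  using one_minus_pow_lower[of x d] by (simp add: hit_def)

lemma hit_linear: "0 \<le> x \<Longrightarrow> x \<le> 1 \<Longrightarrow> 1 \<le> d \<Longrightarrow> hit d x \<le> real d * x"
proof -
  assume "0 \<le> x" "x \<le> 1" "1 \<le> d"
  then have "0 \<le> (real d - 1) * x^2" by simp
  with hit_upper[OF \<open>0 \<le> x\<close> \<open>x \<le> 1\<close> \<open>1 \<le> d\<close>] show ?thesis by linarith
qed

text \<open>Second order lower bound, from Bernoulli's inequality applied to (1 + c)^N.\<close>
lemma hit_lower:
  fixes c :: real
  assumes "0 \<le> c" "c \<le> 1"
  shows "real N * c - (real N * c)^2 \<le> hit N c"
proof -
  have "(1 - c) ^ N * (1 + real N * c) \<le> (1 - c) ^ N * (1 + c) ^ N"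
    using Bernoulli_inequality[of c N] assms by (intro mult_left_mono) auto
  also have "\<dots> = (1 - c^2) ^ N"
    by (simp add: power_mult_distrib[symmetric] algebra_simps power2_eq_square)
  also have "\<dots> \<le> 1"
    using assms by (intro power_le_one) (auto simp: power2_eq_square mult_le_one)
  finally have x: "(1 - c) ^ N * (1 + real N * c) \<le> 1" .
  have y: "1 \<le> (1 - real N * c + (real N * c)^2) * (1 + real N * c)"
    using assms by (simp add: algebra_simps power2_eq_square power3_eq_cube)
  have "0 < 1 + real N * c" using assms by (simp add: add_pos_nonneg)
  then have "(1 - c) ^ N \<le> 1 - real N * c + (real N * c)^2"
    using x y by (smt (verit) mult_right_mono_neg mult_le_cancel_right)
  then show ?thesis by (simp add: hit_def)
qed

lemma hit_hit_pow: "hit d (hit (d ^ k) c) = hit (d ^ Suc k) c"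
  by (simp add: hit_def power_mult[symmetric] mult.commute)

lemma alive_prob_mono_carry: "m \<le> m' \<Longrightarrow> alive_prob d p n m \<le> alive_prob d p n m'"
proof (induction n arbitrary: m m')
  case (Suc n)
  show ?case unfolding alive_prob.simps
  proof (rule integral_mono[OF alive_prob_integrable alive_prob_integrable])
    fix r
    have "max m r \<le> max m' r" using Suc.prems by auto
    then show "(if max m r = 0 then 0 else hit d (alive_prob d p n (max m r - 1)))
       \<le> (if max m' r = 0 then 0 else hit d (alive_prob d p n (max m' r - 1)))"
      using Suc.IH[of "max m r - 1" "max m' r - 1"] alive_prob_bounds[of d p n]
      by (auto simp: hit_mono hit_bounds)
  qed
qed simp

lemma alive_prob_Suc_le: "alive_prob d p (Suc n) m \<le> alive_prob d p n m"
proof (induction n arbitrary: m)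
  case 0
  then show ?case using alive_prob_bounds[of d p 1 m] by simp
next
  case (Suc n)
  show ?case unfolding alive_prob.simps(2)[of d p "Suc n" m] alive_prob.simps(2)[of d p n m]
  proof (rule integral_mono[OF alive_prob_integrable alive_prob_integrable])
    fix r
    show "(if max m r = 0 then 0 else hit d (alive_prob d p (Suc n) (max m r - 1)))
       \<le> (if max m r = 0 then 0 else hit d (alive_prob d p n (max m r - 1)))"
    proof -
      have "hit d (alive_prob d p (Suc n) (max m r - 1)) \<le> hit d (alive_prob d p n (max m r - 1))"
        by (rule hit_mono[OF Suc.IH]) (use alive_prob_bounds in blast)
      then show ?thesis by (simp del: alive_prob.simps)
    qed
  qed
qed

lemma alive_prob_antimono: "n \<le> n' \<Longrightarrow> alive_prob d p n' m \<le> alive_prob d p n m"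
proof (induction n' rule: dec_induct)
  case (step k)
  then show ?case using alive_prob_Suc_le[of d p k m] by linarith
qed simp

section \<open>Part (I): survival with positive probability\<close>

lemma sum_pmf_le_integral:
  fixes f :: "'a \<Rightarrow> real"
  assumes "\<And>r. 0 \<le> f r" "\<And>r. f r \<le> B" "finite A"
  shows "(\<Sum>r\<in>A. pmf p r * f r) \<le> (\<integral>r. f r \<partial>measure_pmf p)"
proof -
  have B: "0 \<le> B" using assms(1,2) order_trans by blast
  have int: "integrable (measure_pmf p) f"
    using assms by (intro measure_pmf.integrable_const_bound[where B=B]) auto
  have int_A: "integrable (measure_pmf p) (\<lambda>r. f r * indicator A r)"
    using assms B by (intro measure_pmf.integrable_const_bound[where B=B])
      (auto simp: indicator_def)
  have "(\<Sum>r\<in>A. pmf p r * f r) = (\<integral>r. f r * indicator A r \<partial>measure_pmf p)"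
    using assms(3) by (subst integral_measure_pmf_real[where A=A])
      (auto simp: indicator_def intro!: sum.cong)
  also have "\<dots> \<le> (\<integral>r. f r \<partial>measure_pmf p)"
    using assms(1) by (intro integral_mono int_A int) (auto simp: indicator_def)
  finally show ?thesis .
qed

lemma truncated_moment_gt:
  fixes p :: "nat pmf"
  assumes "(\<integral>\<^sup>+ k. ennreal (real d ^ k) \<partial>measure_pmf p) > ennreal (1 + pmf p 0)"
  shows "\<exists>N. 1 < (\<Sum>k\<in>{1..<N}. pmf p k * real d ^ k)"
proof -
  have "(\<integral>\<^sup>+ k. ennreal (real d ^ k) \<partial>measure_pmf p)
        = (SUP N. \<Sum>k<N. ennreal (pmf p k) * ennreal (real d ^ k))"
    by (simp add: nn_integral_measure_pmf nn_integral_count_space_nat suminf_eq_SUP)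
  with assms obtain N
    where "ennreal (1 + pmf p 0) < (\<Sum>k<N. ennreal (pmf p k) * ennreal (real d ^ k))"
    by (auto simp: less_SUP_iff)
  also have "(\<Sum>k<N. ennreal (pmf p k) * ennreal (real d ^ k)) = ennreal (\<Sum>k<N. pmf p k * real d ^ k)"
    by (simp add: ennreal_mult' sum_ennreal[symmetric])
  finally have N: "1 + pmf p 0 < (\<Sum>k<N. pmf p k * real d ^ k)"
    by (subst (asm) ennreal_less_iff) auto
  then have "N \<noteq> 0" using pmf_nonneg[of p 0] by (cases N) auto
  then have "{..<N} = insert 0 {1..<N}" by auto
  then have "(\<Sum>k<N. pmf p k * real d ^ k) = pmf p 0 + (\<Sum>k\<in>{1..<N}. pmf p k * real d ^ k)"
    by simp
  with N show ?thesis by auto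
qed

text \<open>A seed c > 0 that the one-step map of the lower bound does not decrease.\<close>
lemma exists_seed:
  fixes p :: "nat pmf"
  assumes d2: "2 \<le> d"
    and H: "(\<integral>\<^sup>+ k. ennreal (real d ^ k) \<partial>measure_pmf p) > ennreal (1 + pmf p 0)"
  shows "\<exists>c. 0 < c \<and> c \<le> 1 \<and> c \<le> (\<integral>r. (if r = 0 then 0 else hit (d ^ r) c) \<partial>measure_pmf p)"
proof -
  obtain N where S1: "1 < (\<Sum>k\<in>{1..<N}. pmf p k * real d ^ k)" (is "1 < ?S")
    using truncated_moment_gt[OF H] by blast
  define T where "T = (\<Sum>k\<in>{1..<N}. pmf p k * (real d ^ k)^2)"
  have "?S \<le> T" unfolding T_def
  proof (rule sum_mono)
    fix k
    have "real d ^ k \<le> (real d ^ k)^2"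
      using d2 by (simp add: power2_eq_square)
    then show "pmf p k * real d ^ k \<le> pmf p k * (real d ^ k)^2" by (intro mult_left_mono) auto
  qed
  define c where "c = (?S - 1) / T"
  have T: "0 < T" using S1 \<open>?S \<le> T\<close> by linarith
  have c: "0 < c" "c \<le> 1" using S1 \<open>?S \<le> T\<close> T by (simp_all add: c_def)
  have "c = ?S * c - T * c^2"
    using T by (simp add: c_def power2_eq_square field_simps)
  also have "\<dots> = (\<Sum>k\<in>{1..<N}. pmf p k * (real (d ^ k) * c - (real (d ^ k) * c)^2))"
    unfolding T_def
    by (simp add: right_diff_distrib sum_subtractf sum_distrib_left power2_eq_square mult_ac)
  also have "\<dots> \<le> (\<Sum>k\<in>{1..<N}. pmf p k * (if k = 0 then 0 else hit (d ^ k) c))"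
  proof (rule sum_mono)
    fix k assume "k \<in> {1..<N}"
    then show "pmf p k * (real (d ^ k) * c - (real (d ^ k) * c)^2)
        \<le> pmf p k * (if k = 0 then 0 else hit (d ^ k) c)"
      using hit_lower[of c "d ^ k"] c by (intro mult_left_mono) auto
  qed
  also have "\<dots> \<le> (\<integral>r. (if r = 0 then 0 else hit (d ^ r) c) \<partial>measure_pmf p)"
    using c hit_bounds by (intro sum_pmf_le_integral[where B=1]) auto
  finally show ?thesis using c by blast
qed

text \<open>Induction on n: with carried range j, at least one of d^j independent subtrees of
  depth j survives with probability c each.\<close>
lemma alive_prob_lower:
  assumes c: "0 < c" "c \<le> 1" and d1: "1 \<le> d"
    and seed: "c \<le> (\<integral>r. (if r = 0 then 0 else hit (d ^ r) c) \<partial>measure_pmf p)"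
  shows "hit (d ^ j) c \<le> alive_prob d p n j"
proof (induction n arbitrary: j)
  case 0
  then show ?case using hit_bounds[of c "d ^ j"] c by simp
next
  case (Suc n)
  define g where "g = (\<lambda>r. if max j r = 0 then 0 else hit (d ^ max j r) c)"
  have "integrable (measure_pmf p) g"
    using hit_bounds c by (intro measure_pmf.integrable_const_bound[where B=1]) (auto simp: g_def)
  moreover have "g r \<le> (if max j r = 0 then 0 else hit d (alive_prob d p n (max j r - 1)))" for r
  proof (cases "max j r")
    case (Suc k)
    have "hit (d ^ Suc k) c = hit d (hit (d ^ k) c)" by (rule hit_hit_pow[symmetric])
    also have "\<dots> \<le> hit d (alive_prob d p n k)"
      using Suc.IH[of k] alive_prob_bounds by (intro hit_mono) auto
    finally show ?thesis unfolding g_def Suc by simp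
  qed (simp add: g_def)
  ultimately have "(\<integral>r. g r \<partial>measure_pmf p) \<le> alive_prob d p (Suc n) j"
    unfolding alive_prob.simps by (intro integral_mono alive_prob_integrable)
  moreover have "hit (d ^ j) c \<le> (\<integral>r. g r \<partial>measure_pmf p)"
  proof (cases "j = 0")
    case True
    then have "g = (\<lambda>r. if r = 0 then 0 else hit (d ^ r) c)" by (auto simp: g_def)
    then show ?thesis using seed True by (simp add: hit_def)
  next
    case False
    have "hit (d ^ j) c \<le> g r" for r
    proof -
      have "d ^ j \<le> d ^ max j r" using d1 by (intro power_increasing) auto
      then have "(1 - c) ^ (d ^ max j r) \<le> (1 - c) ^ (d ^ j)"
        by (rule power_decreasing) (use c in auto)
      then show ?thesis using False by (simp add: g_def hit_def)
    qed
    then have "(\<integral>r. hit (d ^ j) c \<partial>measure_pmf p) \<le> (\<integral>r. g r \<partial>measure_pmf p)"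
      using \<open>integrable (measure_pmf p) g\<close> by (intro integral_mono) auto
    then show ?thesis by simp
  qed
  ultimately show ?case by linarith
qed

lemma survival_positive:
  fixes p :: "nat pmf"
  assumes "2 \<le> d"
    and "(\<integral>\<^sup>+ k. ennreal (real d ^ k) \<partial>measure_pmf p) > ennreal (1 + pmf p 0)"
  shows "measure (cone_space d p) (survival d p) > 0"
proof -
  obtain c where c: "0 < c" "c \<le> 1"
    "c \<le> (\<integral>r. (if r = 0 then 0 else hit (d ^ r) c) \<partial>measure_pmf p)"
    using exists_seed[OF assms] by blast
  have "c \<le> alive_prob d p n 0" for n
    using alive_prob_lower[OF c(1,2) _ c(3), of 0 n] assms(1) by (simp add: hit_def)
  then have "c \<le> measure (cone_space d p) (survival d p)"
    by (intro LIMSEQ_le_const[OF survival_lim]) auto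
  with c(1) show ?thesis by linarith
qed

section \<open>Part (II): almost sure extinction\<close>

lemma integrable_pmf_finite_support:
  fixes f :: "'a \<Rightarrow> real"
  assumes "finite A" "\<And>r. r \<notin> A \<Longrightarrow> f r = 0"
  shows "integrable (measure_pmf p) f"
proof (rule measure_pmf.integrable_const_bound[where B="\<Sum>a\<in>A. \<bar>f a\<bar>"])
  have "\<bar>f r\<bar> \<le> (\<Sum>a\<in>A. \<bar>f a\<bar>)" for r
    using assms member_le_sum[of r A "\<lambda>a. \<bar>f a\<bar>"] by (cases "r \<in> A") (auto intro: sum_nonneg)
  then show "AE r in measure_pmf p. norm (f r) \<le> (\<Sum>a\<in>A. \<bar>f a\<bar>)" by simp
qed simp

lemma alive_prob_carry_step:
  assumes "1 \<le> d"
  shows "alive_prob d p (Suc n) (Suc m) \<le> alive_prob d p (Suc n) 0 + real d * alive_prob d p n m"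
proof -
  let ?A = "\<lambda>r. if max (Suc m) r = 0 then 0 else hit d (alive_prob d p n (max (Suc m) r - 1))"
  let ?B = "\<lambda>r. if max 0 r = 0 then 0 else hit d (alive_prob d p n (max 0 r - 1))"
  have "(\<integral>r. ?A r \<partial>measure_pmf p) \<le> (\<integral>r. ?B r + real d * alive_prob d p n m \<partial>measure_pmf p)"
  proof (rule integral_mono[OF alive_prob_integrable])
    show "integrable (measure_pmf p) (\<lambda>r. ?B r + real d * alive_prob d p n m)"
      by (intro Bochner_Integration.integrable_add alive_prob_integrable) simp
    fix r
    have B: "0 \<le> ?B r" "0 \<le> real d * alive_prob d p n m"
      using hit_bounds alive_prob_bounds by auto
    show "?A r \<le> ?B r + real d * alive_prob d p n m"
    proof (cases "Suc m \<le> r")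
      case False
      then have "?A r = hit d (alive_prob d p n m)" by (simp add: max_def)
      also have "\<dots> \<le> real d * alive_prob d p n m"
        using hit_linear alive_prob_bounds assms by blast
      finally show ?thesis using B by linarith
    qed (use B in \<open>simp add: max_def\<close>)
  qed
  also have "\<dots> = (\<integral>r. ?B r \<partial>measure_pmf p) + real d * alive_prob d p n m"
    by (subst Bochner_Integration.integral_add[OF alive_prob_integrable]) simp_all
  finally show ?thesis
    unfolding alive_prob.simps(2)[of d p n "Suc m"] alive_prob.simps(2)[of d p n 0] .
qed

lemma alive_prob_carry:
  assumes "1 \<le> d" "m \<le> n"
  shows "alive_prob d p n m \<le> (\<Sum>j\<le>m. real d ^ j) * alive_prob d p (n - m) 0"
  using assms(2)
proof (induction m arbitrary: n)
  case (Suc m)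
  then obtain n' where n: "n = Suc n'" "m \<le> n'" by (cases n) auto
  have "alive_prob d p n (Suc m) \<le> alive_prob d p n 0 + real d * alive_prob d p n' m"
    unfolding n(1) by (rule alive_prob_carry_step[OF assms(1)])
  also have "\<dots> \<le> alive_prob d p (n' - m) 0
      + real d * ((\<Sum>j\<le>m. real d ^ j) * alive_prob d p (n' - m) 0)"
    using Suc.IH[OF n(2)] n by (intro add_mono mult_left_mono alive_prob_antimono) auto
  also have "\<dots> = (1 + real d * (\<Sum>j\<le>m. real d ^ j)) * alive_prob d p (n - Suc m) 0"
    by (simp add: n(1) algebra_simps)
  also have "1 + real d * (\<Sum>j\<le>m. real d ^ j) = (\<Sum>j\<le>Suc m. real d ^ j)"
    by (simp add: sum.atMost_Suc_shift sum_distrib_left del: sum.atMost_Suc)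
  finally show ?case .
qed simp

lemma truncated_moment_le:
  fixes p :: "nat pmf"
  assumes d2: "2 \<le> d"
    and H: "(\<integral>\<^sup>+ k. ennreal (real d ^ k) \<partial>measure_pmf p) \<le> ennreal (2 - 1 / real d)"
  shows "(\<Sum>r\<in>{1..L}. pmf p r * (real d ^ r - 1)) \<le> 1 - 1 / real d"
proof -
  define g where "g = (\<lambda>k. if k \<in> {1..L} then real d ^ k - 1 else 0 :: real)"
  have g: "0 \<le> g k" "1 + g k \<le> real d ^ k" for k
    using d2 by (simp_all add: g_def)
  have int: "integrable (measure_pmf p) g"
    by (rule integrable_pmf_finite_support[of "{1..L}"]) (auto simp: g_def)
  have "ennreal (1 + (\<Sum>r\<in>{1..L}. g r * pmf p r)) = ennreal (\<integral>k. 1 + g k \<partial>measure_pmf p)"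
  proof -
    have "(\<integral>k. g k \<partial>measure_pmf p) = (\<Sum>r\<in>{1..L}. g r * pmf p r)"
      by (rule integral_measure_pmf_real) (auto simp: g_def split: if_splits)
    moreover have "(\<integral>k. 1 + g k \<partial>measure_pmf p) = 1 + (\<integral>k. g k \<partial>measure_pmf p)"
      using int by (subst Bochner_Integration.integral_add) auto
    ultimately show ?thesis by simp
  qed
  also have "\<dots> = (\<integral>\<^sup>+ k. ennreal (1 + g k) \<partial>measure_pmf p)"
    using int g by (intro nn_integral_eq_integral[symmetric]) auto
  also have "\<dots> \<le> (\<integral>\<^sup>+ k. ennreal (real d ^ k) \<partial>measure_pmf p)"
    using g by (intro nn_integral_mono ennreal_leI) auto
  also have "\<dots> \<le> ennreal (2 - 1 / real d)" by (rule H)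
  finally have "1 + (\<Sum>r\<in>{1..L}. g r * pmf p r) \<le> 2 - 1 / real d"
    using d2 by (subst (asm) ennreal_le_iff) (auto simp: field_simps)
  then show ?thesis by (simp add: g_def mult.commute)
qed

lemma weighted_carry_le_one:
  fixes p :: "nat pmf"
  assumes d2: "2 \<le> d"
    and H: "(\<integral>\<^sup>+ k. ennreal (real d ^ k) \<partial>measure_pmf p) \<le> ennreal (2 - 1 / real d)"
  shows "(\<Sum>r\<in>{1..L}. pmf p r * (real d * (\<Sum>j\<le>r - 1. real d ^ j))) \<le> 1"
proof -
  have geom: "(real d - 1) * (\<Sum>j\<le>r - 1. real d ^ j) = real d ^ r - 1" if "1 \<le> r" for r
    using sum_gp_basic[of "real d" "r - 1"] that by (simp add: algebra_simps)
  have "(real d - 1) * (pmf p r * (real d * (\<Sum>j\<le>r - 1. real d ^ j)))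
      = real d * (pmf p r * (real d ^ r - 1))" if "r \<in> {1..L}" for r
  proof -
    have "(real d - 1) * (pmf p r * (real d * (\<Sum>j\<le>r - 1. real d ^ j)))
        = pmf p r * real d * ((real d - 1) * (\<Sum>j\<le>r - 1. real d ^ j))"
      by (simp add: algebra_simps)
    also have "\<dots> = pmf p r * real d * (real d ^ r - 1)"
      by (subst geom[of r]) (use that in auto)
    finally show ?thesis by (simp add: algebra_simps)
  qed
  then have "(real d - 1) * (\<Sum>r\<in>{1..L}. pmf p r * (real d * (\<Sum>j\<le>r - 1. real d ^ j)))
      = real d * (\<Sum>r\<in>{1..L}. pmf p r * (real d ^ r - 1))"
    by (simp add: sum_distrib_left)
  also have "\<dots> \<le> real d * (1 - 1 / real d)"
    using truncated_moment_le[OF d2 H] by (intro mult_left_mono) auto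
  also have "\<dots> = real d - 1" using d2 by (simp add: field_simps)
  finally show ?thesis using d2 by simp
qed

lemma step_integrand_bound:
  assumes d1: "1 \<le> d" and eps: "0 \<le> \<epsilon>" "\<epsilon> \<le> alive_prob d p n 0"
    and r: "1 \<le> r" "r \<le> L" "L \<le> Suc n"
  shows "hit d (alive_prob d p n (r - 1))
     \<le> real d * (\<Sum>j\<le>r - 1. real d ^ j) * alive_prob d p (Suc n - L) 0 - (real d - 1) * \<epsilon>^2"
proof -
  define x where "x = alive_prob d p n (r - 1)"
  have x: "0 \<le> x" "x \<le> 1" using alive_prob_bounds by (auto simp: x_def)
  have "x \<le> (\<Sum>j\<le>r - 1. real d ^ j) * alive_prob d p (n - (r - 1)) 0"
    unfolding x_def using r by (intro alive_prob_carry[OF d1]) auto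
  also have "\<dots> \<le> (\<Sum>j\<le>r - 1. real d ^ j) * alive_prob d p (Suc n - L) 0"
    using r by (intro mult_left_mono alive_prob_antimono sum_nonneg) auto
  finally have upper: "x \<le> (\<Sum>j\<le>r - 1. real d ^ j) * alive_prob d p (Suc n - L) 0" .
  have "\<epsilon> \<le> x"
    unfolding x_def using eps(2) alive_prob_mono_carry[of 0 "r - 1" d p n] by linarith
  then have "(real d - 1) * \<epsilon>^2 \<le> (real d - 1) * x^2"
    using eps d1 by (intro mult_left_mono power_mono) auto
  moreover have "real d * x \<le> real d * ((\<Sum>j\<le>r - 1. real d ^ j) * alive_prob d p (Suc n - L) 0)"
    using upper by (intro mult_left_mono) auto
  ultimately show ?thesis
    using hit_upper[OF x d1] unfolding x_def[symmetric] by (simp add: mult.assoc)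
qed

lemma step_bound:
  fixes p :: "nat pmf"
  assumes d2: "2 \<le> d"
    and H: "(\<integral>\<^sup>+ k. ennreal (real d ^ k) \<partial>measure_pmf p) \<le> ennreal (2 - 1 / real d)"
    and eps: "0 \<le> \<epsilon>" "\<epsilon> \<le> alive_prob d p n 0" and L: "1 \<le> L" "L \<le> Suc n"
  shows "alive_prob d p (Suc n) 0 \<le> alive_prob d p (Suc n - L) 0
           - (real d - 1) * \<epsilon>^2 * (\<Sum>r\<in>{1..L}. pmf p r) + measure (measure_pmf p) {L<..}"
proof -
  define a where "a = alive_prob d p (Suc n - L) 0"
  define V where "V = (\<lambda>r. \<Sum>j\<le>r - 1. real d ^ j)"
  define h1 where "h1 = (\<lambda>r. if r \<in> {1..L} then real d * V r * a - (real d - 1) * \<epsilon>^2 else 0)"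
  have a: "0 \<le> a" "a \<le> 1" using alive_prob_bounds by (auto simp: a_def)
  have int_h1: "integrable (measure_pmf p) h1"
    by (rule integrable_pmf_finite_support[of "{1..L}"]) (auto simp: h1_def)
  have int_tail: "integrable (measure_pmf p) (indicator {L<..} :: nat \<Rightarrow> real)"
    by (rule measure_pmf.integrable_const_bound[where B=1]) auto
  have "alive_prob d p (Suc n) 0 \<le> (\<integral>r. h1 r + indicator {L<..} r \<partial>measure_pmf p)"
    unfolding alive_prob.simps
  proof (intro integral_mono alive_prob_integrable Bochner_Integration.integrable_add int_h1
      int_tail)
    fix r
    show "(if max 0 r = 0 then 0 else hit d (alive_prob d p n (max 0 r - 1)))
        \<le> h1 r + indicator {L<..} r"
    proof (cases "r \<in> {1..L}")
      case True
      then show ?thesis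
        using step_integrand_bound[OF _ eps, of r L] d2 L by (auto simp: h1_def V_def a_def)
    next
      case False
      then show ?thesis using hit_bounds alive_prob_bounds by (auto simp: h1_def)
    qed
  qed
  also have "\<dots> = (\<integral>r. h1 r \<partial>measure_pmf p) + measure (measure_pmf p) {L<..}"
    using int_h1 int_tail by (subst Bochner_Integration.integral_add) auto
  also have "(\<integral>r. h1 r \<partial>measure_pmf p) = (\<Sum>r\<in>{1..L}. h1 r * pmf p r)"
    by (rule integral_measure_pmf_real) (auto simp: h1_def split: if_splits)
  also have "(\<Sum>r\<in>{1..L}. h1 r * pmf p r)
      = a * (\<Sum>r\<in>{1..L}. pmf p r * (real d * V r)) - (real d - 1) * \<epsilon>^2 * (\<Sum>r\<in>{1..L}. pmf p r)"
    by (simp add: h1_def sum_distrib_left sum_subtractf sum.distrib algebra_simps)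
  also have "\<dots> \<le> a - (real d - 1) * \<epsilon>^2 * (\<Sum>r\<in>{1..L}. pmf p r)"
    using mult_left_mono[OF weighted_carry_le_one[OF d2 H, of L] a(1)] by (simp add: V_def)
  finally show ?thesis by (simp add: a_def)
qed

lemma exists_truncation:
  fixes p :: "nat pmf"
  assumes "pmf p 0 < 1" "0 < \<delta>"
  shows "\<exists>L\<ge>1. measure (measure_pmf p) {L<..} < \<delta>
                \<and> (1 - pmf p 0) / 2 \<le> (\<Sum>r\<in>{1..L}. pmf p r)"
proof -
  have "(\<lambda>L. measure (measure_pmf p) {L<..}) \<longlonglongrightarrow> measure (measure_pmf p) (\<Inter>L. {L<..})"
    by (rule measure_pmf.finite_Lim_measure_decseq) (auto simp: decseq_def)
  moreover have "(\<Inter>L. {L<..}) = ({} :: nat set)" by auto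
  ultimately have "(\<lambda>L. measure (measure_pmf p) {L<..}) \<longlonglongrightarrow> 0" by simp
  moreover have "0 < min ((1 - pmf p 0) / 2) \<delta>" using assms by simp
  ultimately have "eventually (\<lambda>L. measure (measure_pmf p) {L<..} < min ((1 - pmf p 0) / 2) \<delta>)
      sequentially"
    by (rule order_tendstoD(2))
  then obtain L0 where
    L0: "\<And>L. L0 \<le> L \<Longrightarrow> measure (measure_pmf p) {L<..} < min ((1 - pmf p 0) / 2) \<delta>"
    by (auto simp: eventually_sequentially)
  define L where "L = max 1 L0"
  have "UNIV - {..L} = {L<..}" by auto
  then have "measure (measure_pmf p) {L<..} = 1 - (\<Sum>r\<le>L. pmf p r)"
    using measure_pmf.prob_compl[of "{..L}" p] by (simp add: measure_measure_pmf_finite)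
  also have "{..L} = insert 0 {1..L}" by auto
  finally have "(\<Sum>r\<in>{1..L}. pmf p r) = 1 - pmf p 0 - measure (measure_pmf p) {L<..}" by simp
  then show ?thesis using L0[of L] by (intro exI[of _ L]) (auto simp: L_def)
qed

text \<open>Under hypothesis (II) the survival probabilities become arbitrarily small: otherwise
  they would decrease by a fixed amount kappa every L generations.\<close>
lemma alive_prob_eventually_small:
  fixes p :: "nat pmf"
  assumes d2: "2 \<le> d" and p0: "pmf p 0 < 1"
    and H: "(\<integral>\<^sup>+ k. ennreal (real d ^ k) \<partial>measure_pmf p) \<le> ennreal (2 - 1 / real d)"
    and eps: "0 < \<epsilon>"
  shows "\<exists>n. alive_prob d p n 0 < \<epsilon>"
proof (rule ccontr)
  assume "\<not> (\<exists>n. alive_prob d p n 0 < \<epsilon>)"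
  then have above: "\<epsilon> \<le> alive_prob d p n 0" for n by (simp add: not_less)
  define \<kappa> where "\<kappa> = (real d - 1) * \<epsilon>^2 * (1 - pmf p 0) / 4"
  have \<kappa>: "0 < \<kappa>" using d2 eps p0 by (simp add: \<kappa>_def)
  obtain L where L: "1 \<le> L" "measure (measure_pmf p) {L<..} < \<kappa>"
    "(1 - pmf p 0) / 2 \<le> (\<Sum>r\<in>{1..L}. pmf p r)"
    using exists_truncation[OF p0 \<kappa>] by blast
  have "2 * \<kappa> \<le> (real d - 1) * \<epsilon>^2 * (\<Sum>r\<in>{1..L}. pmf p r)"
    using mult_left_mono[OF L(3), of "(real d - 1) * \<epsilon>^2"] d2 by (simp add: \<kappa>_def mult_ac)
  then have step: "alive_prob d p (Suc n) 0 \<le> alive_prob d p (Suc n - L) 0 - \<kappa>"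
    if "L \<le> Suc n" for n
    using step_bound[OF d2 H _ above L(1) that] eps L(2) by simp
  have iter: "alive_prob d p (L + k * L) 0 \<le> 1 - real k * \<kappa>" for k
  proof (induction k)
    case 0
    then show ?case using alive_prob_bounds[of d p L 0] by simp
  next
    case (Suc k)
    have "L + Suc k * L = Suc (L + Suc k * L - 1)" "L + Suc k * L - L = L + k * L"
      using L(1) by simp_all
    then show ?case
      using step[of "L + Suc k * L - 1"] Suc.IH by (simp add: algebra_simps)
  qed
  obtain k where "1 < real k * \<kappa>" using ex_less_of_nat_mult[OF \<kappa>] by blast
  with iter[of k] above[of "L + k * L"] eps show False by simp
qed

lemma survival_null:
  fixes p :: "nat pmf"
  assumes "2 \<le> d" "pmf p 0 < 1"
    and "(\<integral>\<^sup>+ k. ennreal (real d ^ k) \<partial>measure_pmf p) \<le> ennreal (2 - 1 / real d)"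
  shows "measure (cone_space d p) (survival d p) = 0"
proof (rule ccontr)
  assume "measure (cone_space d p) (survival d p) \<noteq> 0"
  then have "0 < measure (cone_space d p) (survival d p)"
    using measure_nonneg[of "cone_space d p" "survival d p"] by linarith
  then obtain n where "alive_prob d p n 0 < measure (cone_space d p) (survival d p)"
    using alive_prob_eventually_small[OF assms] by blast
  then show False using survival_le[of d p n] by linarith
qed

theorem theorem1:
  fixes d :: nat and p :: "nat pmf"
  assumes "d \<ge> 2" and "0 < pmf p 0" and "pmf p 0 < 1"
  shows "((\<integral>\<^sup>+ k. ennreal (real d ^ k) \<partial>measure_pmf p) > ennreal (1 + pmf p 0)
            \<longrightarrow> survival d p \<in> sets (cone_space d p)
                \<and> measure (cone_space d p) (survival d p) > 0)
       \<and> ((\<integral>\<^sup>+ k. ennreal (real d ^ k) \<partial>measure_pmf p) \<le> ennreal (2 - 1 / real d)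
            \<longrightarrow> survival d p \<in> sets (cone_space d p)
                \<and> measure (cone_space d p) (survival d p) = 0)"
  using survival_sets survival_positive[OF assms(1)] survival_null[OF assms(1,3)] by blast

end
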